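(* Let $\mathcal{A}\in\mathcal{T}'_5$ with $c_{13}^4=c_{14}^5=c_{24}^5=0$. Then the automorphisms of $\mathcal{A}$ are exactly the linear maps $\varphi$ given by $\varphi(e_1)=xe_1+a_{41}e_4+a_{51}e_5$, $\varphi(e_2)=a_{12}e_1+ye_2+a_{42}e_4+a_{52}e_5$, $\varphi(e_3)=xye_3$, $\varphi(e_4)=xy^2e_4+a_{54}e_5$, $\varphi(e_5)=x^2y^3e_5$, where $x,y\in\mathbb{C}^*$, $a_{12},a_{42},a_{51},a_{52}\in\mathbb{C}$ are arbitrary, $a_{41}=c_{13}^5x(1-y^2)$ and $a_{54}=xy(a_{12}c_{13}^5-a_{42})$.
   Context: Over $\mathbb{C}$, basis $e_1,\dots,e_n$, $e_ie_j=\sum_kc_{ij}^ke_k$. For $n\ge3$, $\mathcal{T}'_n$ is the family of anticommutative algebra structures with $c_{ij}^k=0$ whenever $k\le\max\{i,j\}$ and $e_ie_{i+1}=e_{i+2}$ for $1\le i\le n-2$, other structure constants arbitrary subject to these and anticommutativity. *)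

theory Defs
  imports Main "HOL-Library.Complex_Order" Complex_Main
begin

text \<open>Vectors of the n-dimensional algebra: coordinate functions w.r.t. the basis
e_1,...,e_n, i.e. functions nat => complex supported in {1..n}.
Structure constants: c i j k is the coefficient of e_k in e_i e_j.\<close>

definition vecs :: "nat \<Rightarrow> (nat \<Rightarrow> complex) set" where
  "vecs n = {v. \<forall>i. i \<notin> {1..n} \<longrightarrow> v i = 0}"

definition alg_mult :: "nat \<Rightarrow> (nat \<Rightarrow> nat \<Rightarrow> nat \<Rightarrow> complex) \<Rightarrow>
    (nat \<Rightarrow> complex) \<Rightarrow> (nat \<Rightarrow> complex) \<Rightarrow> (nat \<Rightarrow> complex)" where
  "alg_mult n c u v = (\<lambda>k. if k \<in> {1..n}
      then (\<Sum>i\<in>{1..n}. \<Sum>j\<in>{1..n}. u i * v j * c i j k) else 0)"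

text \<open>Linear map given by matrix A: column j is the image of e_j, A i j its e_i-coefficient.\<close>
definition matvec :: "nat \<Rightarrow> (nat \<Rightarrow> nat \<Rightarrow> complex) \<Rightarrow> (nat \<Rightarrow> complex) \<Rightarrow> (nat \<Rightarrow> complex)" where
  "matvec n A v = (\<lambda>i. if i \<in> {1..n} then (\<Sum>j\<in>{1..n}. A i j * v j) else 0)"

definition is_matrix :: "nat \<Rightarrow> (nat \<Rightarrow> nat \<Rightarrow> complex) \<Rightarrow> bool" where
  "is_matrix n A \<longleftrightarrow> (\<forall>i j. i \<notin> {1..n} \<or> j \<notin> {1..n} \<longrightarrow> A i j = 0)"

definition is_automorphism :: "nat \<Rightarrow> (nat \<Rightarrow> nat \<Rightarrow> nat \<Rightarrow> complex) \<Rightarrow> (nat \<Rightarrow> nat \<Rightarrow> complex) \<Rightarrow> bool" where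
  "is_automorphism n c A \<longleftrightarrow> is_matrix n A \<and> bij_betw (matvec n A) (vecs n) (vecs n) \<and>
     (\<forall>u\<in>vecs n. \<forall>v\<in>vecs n. matvec n A (alg_mult n c u v) = alg_mult n c (matvec n A u) (matvec n A v))"

definition in_T' :: "nat \<Rightarrow> (nat \<Rightarrow> nat \<Rightarrow> nat \<Rightarrow> complex) \<Rightarrow> bool" where
  "in_T' n c \<longleftrightarrow>
     (\<forall>i\<in>{1..n}. \<forall>j\<in>{1..n}. \<forall>k\<in>{1..n}. c i j k = - c j i k) \<and>
     (\<forall>i\<in>{1..n}. \<forall>j\<in>{1..n}. \<forall>k\<in>{1..n}. k \<le> max i j \<longrightarrow> c i j k = 0) \<and>
     (\<forall>i. 1 \<le> i \<and> i + 2 \<le> n \<longrightarrow> (\<forall>k\<in>{1..n}. c i (i+1) k = (if k = i + 2 then 1 else 0)))"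

definition mat5 :: "complex list list \<Rightarrow> nat \<Rightarrow> nat \<Rightarrow> complex" where
  "mat5 rows i j = (if i \<in> {1..5} \<and> j \<in> {1..5} then rows ! (i - 1) ! (j - 1) else 0)"

end

theory Submission
  imports Defs
begin

text \<open>Under the hypotheses the only nonzero products of basis vectors with smaller
index first are e1 e2 = e3, e2 e3 = e4, e3 e4 = e5 and e1 e3 = a e5, where a = c_13^5.
Hence the columns f_j = \<phi>(e_j) of an automorphism satisfy f3 = f1 f2, f4 = f2 f3,
f5 = f3 f4, a f5 = f1 f3 and f1 f4 = f2 f4 = 0. Read coordinatewise, the first three
equations kill the entries above the diagonal in columns 3 to 5 and give
\<phi>_55 = \<phi>_33 \<phi>_44, which is nonzero by injectivity; the last three then force
the remaining entries. Conversely, the matrices obtained are multiplicative by direct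
computation and invertible by back substitution.\<close>

definition mult5 :: "complex \<Rightarrow> (nat \<Rightarrow> complex) \<Rightarrow> (nat \<Rightarrow> complex) \<Rightarrow> nat \<Rightarrow> complex" where
  "mult5 a u v = (\<lambda>k. if k = 3 then u 1 * v 2 - u 2 * v 1
     else if k = 4 then u 2 * v 3 - u 3 * v 2
     else if k = 5 then a * (u 1 * v 3 - u 3 * v 1) + (u 3 * v 4 - u 4 * v 3) else 0)"

lemma sum_1_to_5: "(\<Sum>i\<in>{1..5::nat}. f i) = f 1 + f 2 + f 3 + f 4 + f 5"
  by (simp add: numeral_eq_Suc add.assoc)

lemma in_1_5_cases:
  assumes "i \<in> {1..5::nat}"
  obtains "i = 1" | "i = 2" | "i = 3" | "i = 4" | "i = 5"
  using assms by fastforce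

lemma in_T'_anticomm:
  "\<lbrakk>in_T' n c; i \<in> {1..n}; j \<in> {1..n}; k \<in> {1..n}\<rbrakk> \<Longrightarrow> c i j k = - c j i k"
  unfolding in_T'_def by blast

lemma in_T'_diag:
  assumes "in_T' n c" and "i \<in> {1..n}" and "k \<in> {1..n}"
  shows "c i i k = 0"
proof -
  have "c i i k = - c i i k" using in_T'_anticomm[OF assms(1,2,2,3)] .
  then show ?thesis by simp
qed

lemma in_T'_triangular:
  "\<lbrakk>in_T' n c; i \<in> {1..n}; j \<in> {1..n}; k \<in> {1..n}; k \<le> max i j\<rbrakk> \<Longrightarrow> c i j k = 0"
  unfolding in_T'_def by blast

lemma in_T'_chain:
  "\<lbrakk>in_T' n c; 1 \<le> i; i + 2 \<le> n; k \<in> {1..n}\<rbrakk> \<Longrightarrow> c i (i + 1) k = (if k = i + 2 then 1 else 0)"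
  unfolding in_T'_def by blast

lemma alg_mult_T'_5:
  assumes T: "in_T' 5 c" and "c 1 3 4 = 0" "c 1 4 5 = 0" "c 2 4 5 = 0"
  shows "alg_mult 5 c u v = mult5 (c 1 3 5) u v"
proof
  have anticomm: "c i j k = - c j i k"
    if "i \<in> {1..5}" "j \<in> {1..5}" "k \<in> {1..5}" "j < i" for i j k
    using in_T'_anticomm[OF T] that by blast
  have chain: "c 1 2 k = (if k = 3 then 1 else 0)" "c 2 3 k = (if k = 4 then 1 else 0)"
      "c 3 4 k = (if k = 5 then 1 else 0)" if "k \<in> {1..5}" for k
    using in_T'_chain[OF T, of 1 k] in_T'_chain[OF T, of 2 k] in_T'_chain[OF T, of 3 k] that
    by (simp_all add: one_plus_numeral numeral_plus_one del: One_nat_def)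
  fix k
  show "alg_mult 5 c u v k = mult5 (c 1 3 5) u v k"
  proof (cases "k \<in> {1..5}")
    case True
    then show ?thesis
      unfolding alg_mult_def if_P[OF True] sum_1_to_5
      by (cases rule: in_1_5_cases)
        (simp_all add: mult5_def anticomm chain in_T'_diag[OF T] in_T'_triangular[OF T] assms(2-)
          algebra_simps del: One_nat_def)
  qed (auto simp: alg_mult_def mult5_def)
qed

definition unit_vec :: "nat \<Rightarrow> nat \<Rightarrow> complex" where
  "unit_vec j = (\<lambda>i. if i = j then 1 else 0)"

lemma unit_vec_in_vecs: "j \<in> {1..n} \<Longrightarrow> unit_vec j \<in> vecs n"
  by (auto simp: unit_vec_def vecs_def)

lemma matvec_unit_vec:
  assumes "is_matrix n A" and "j \<in> {1..n}"
  shows "matvec n A (unit_vec j) = (\<lambda>i. A i j)"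
  using assms by (auto simp: matvec_def unit_vec_def is_matrix_def if_distrib[of "(*) _"] cong: if_cong)

lemma matvec_scale: "matvec n A (\<lambda>i. a * v i) = (\<lambda>i. a * matvec n A v i)"
  by (auto simp: matvec_def sum_distrib_left algebra_simps)

lemma matvec_zero: "matvec n A (\<lambda>i. 0) = (\<lambda>i. 0)"
  by (rule ext) (simp add: matvec_def)

lemma inj_matvec_column_nonzero:
  assumes "is_matrix n A" and "inj_on (matvec n A) (vecs n)" and "j \<in> {1..n}"
  shows "\<exists>i. A i j \<noteq> 0"
proof (rule ccontr)
  assume "\<nexists>i. A i j \<noteq> 0"
  then have "matvec n A (unit_vec j) = matvec n A (\<lambda>i. 0)"
    using assms(1,3) by (simp add: matvec_unit_vec matvec_zero)
  then have "unit_vec j = (\<lambda>i. 0)"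
    using assms(2,3) unit_vec_in_vecs by (auto simp: inj_on_def vecs_def)
  then show False
    by (metis unit_vec_def zero_neq_one)
qed

lemma mult5_hom_columns:
  assumes "is_matrix 5 A"
    and hom: "\<forall>u\<in>vecs 5. \<forall>v\<in>vecs 5.
      matvec 5 A (mult5 a u v) = mult5 a (matvec 5 A u) (matvec 5 A v)"
  shows "mult5 a (\<lambda>i. A i 1) (\<lambda>i. A i 2) = (\<lambda>i. A i 3)"
    and "mult5 a (\<lambda>i. A i 2) (\<lambda>i. A i 3) = (\<lambda>i. A i 4)"
    and "mult5 a (\<lambda>i. A i 3) (\<lambda>i. A i 4) = (\<lambda>i. A i 5)"
    and "mult5 a (\<lambda>i. A i 1) (\<lambda>i. A i 3) = (\<lambda>i. a * A i 5)"
    and "mult5 a (\<lambda>i. A i 1) (\<lambda>i. A i 4) = (\<lambda>i. 0)"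
    and "mult5 a (\<lambda>i. A i 2) (\<lambda>i. A i 4) = (\<lambda>i. 0)"
proof -
  have hom_unit:
      "mult5 a (\<lambda>k. A k i) (\<lambda>k. A k j) = matvec 5 A (mult5 a (unit_vec i) (unit_vec j))"
    if "i \<in> {1..5}" "j \<in> {1..5}" for i j
    using hom that assms(1) by (simp add: unit_vec_in_vecs matvec_unit_vec)
  have "mult5 a (unit_vec 1) (unit_vec 2) = unit_vec 3"
    and "mult5 a (unit_vec 2) (unit_vec 3) = unit_vec 4"
    and "mult5 a (unit_vec 3) (unit_vec 4) = unit_vec 5"
    and "mult5 a (unit_vec 1) (unit_vec 3) = (\<lambda>i. a * unit_vec 5 i)"
    and "mult5 a (unit_vec 1) (unit_vec 4) = (\<lambda>i. 0)"
    and "mult5 a (unit_vec 2) (unit_vec 4) = (\<lambda>i. 0)"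
    by (auto simp: mult5_def unit_vec_def)
  with hom_unit show "mult5 a (\<lambda>i. A i 1) (\<lambda>i. A i 2) = (\<lambda>i. A i 3)"
    and "mult5 a (\<lambda>i. A i 2) (\<lambda>i. A i 3) = (\<lambda>i. A i 4)"
    and "mult5 a (\<lambda>i. A i 3) (\<lambda>i. A i 4) = (\<lambda>i. A i 5)"
    and "mult5 a (\<lambda>i. A i 1) (\<lambda>i. A i 3) = (\<lambda>i. a * A i 5)"
    and "mult5 a (\<lambda>i. A i 1) (\<lambda>i. A i 4) = (\<lambda>i. 0)"
    and "mult5 a (\<lambda>i. A i 2) (\<lambda>i. A i 4) = (\<lambda>i. 0)"
    using assms(1) by (simp_all add: matvec_unit_vec matvec_scale matvec_zero)
qed

definition aut_matrix ::
    "complex \<Rightarrow> complex \<Rightarrow> complex \<Rightarrow> complex \<Rightarrow> complex \<Rightarrow> complex \<Rightarrow> complex \<Rightarrow>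
      nat \<Rightarrow> nat \<Rightarrow> complex" where
  "aut_matrix a x y a12 a42 a51 a52 =
     mat5 [[x,                 a12, 0,     0,                      0],
           [0,                 y,   0,     0,                      0],
           [0,                 0,   x * y, 0,                      0],
           [a * x * (1 - y^2), a42, 0,     x * y^2,                0],
           [a51,               a52, 0,     x * y * (a12 * a - a42), x^2 * y^3]]"

lemma aut_matrix_eqI:
  assumes "is_matrix 5 A"
    and "A 2 1 = 0" "A 3 1 = 0" "A 3 2 = 0"
    and "\<forall>i\<in>{1, 2, 4, 5}. A i 3 = 0" "\<forall>i\<in>{1, 2, 3}. A i 4 = 0"
      "\<forall>i\<in>{1, 2, 3, 4}. A i 5 = 0"
    and "A 3 3 = A 1 1 * A 2 2" "A 4 4 = A 1 1 * A 2 2 ^ 2" "A 5 5 = A 1 1 ^ 2 * A 2 2 ^ 3"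
    and "A 4 1 = a * A 1 1 * (1 - A 2 2 ^ 2)" "A 5 4 = A 1 1 * A 2 2 * (A 1 2 * a - A 4 2)"
  shows "A = aut_matrix a (A 1 1) (A 2 2) (A 1 2) (A 4 2) (A 5 1) (A 5 2)"
proof (intro ext)
  fix i j
  show "A i j = aut_matrix a (A 1 1) (A 2 2) (A 1 2) (A 4 2) (A 5 1) (A 5 2) i j"
  proof (cases "i \<in> {1..5} \<and> j \<in> {1..5}")
    case True
    then have i: "i \<in> {1..5}" and j: "j \<in> {1..5}" by auto
    show ?thesis
      by (rule in_1_5_cases[OF i]; rule in_1_5_cases[OF j])
        (simp_all add: aut_matrix_def mat5_def assms(2-) del: One_nat_def)
  next
    case False
    with assms(1) show ?thesis by (auto simp: is_matrix_def aut_matrix_def mat5_def)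
  qed
qed

lemma mult5_hom_imp_aut_matrix:
  assumes "is_matrix 5 A"
    and hom: "\<forall>u\<in>vecs 5. \<forall>v\<in>vecs 5.
      matvec 5 A (mult5 a u v) = mult5 a (matvec 5 A u) (matvec 5 A v)"
    and "\<exists>i. A i 5 \<noteq> 0"
  shows "\<exists>x y a12 a42 a51 a52. x \<noteq> 0 \<and> y \<noteq> 0 \<and> A = aut_matrix a x y a12 a42 a51 a52"
proof -
  note cols = mult5_hom_columns[OF assms(1) hom]
  have col3: "A 1 3 = 0" "A 2 3 = 0" "A 3 3 = A 1 1 * A 2 2 - A 2 1 * A 1 2"
      "A 4 3 = A 2 1 * A 3 2 - A 3 1 * A 2 2"
      "A 5 3 = a * (A 1 1 * A 3 2 - A 3 1 * A 1 2) + (A 3 1 * A 4 2 - A 4 1 * A 3 2)"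
    using cols(1)[THEN fun_cong, of 1] cols(1)[THEN fun_cong, of 2] cols(1)[THEN fun_cong, of 3]
      cols(1)[THEN fun_cong, of 4] cols(1)[THEN fun_cong, of 5]
    by (simp_all add: mult5_def)
  have col4: "A 1 4 = 0" "A 2 4 = 0" "A 3 4 = 0" "A 4 4 = A 2 2 * A 3 3 - A 3 2 * A 2 3"
      "A 5 4 = a * (A 1 2 * A 3 3 - A 3 2 * A 1 3) + (A 3 2 * A 4 3 - A 4 2 * A 3 3)"
    using cols(2)[THEN fun_cong, of 1] cols(2)[THEN fun_cong, of 2] cols(2)[THEN fun_cong, of 3]
      cols(2)[THEN fun_cong, of 4] cols(2)[THEN fun_cong, of 5] col3
    by (simp_all add: mult5_def)
  have col5: "A 1 5 = 0" "A 2 5 = 0" "A 3 5 = 0" "A 4 5 = 0" "A 5 5 = A 3 3 * A 4 4"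
    using cols(3)[THEN fun_cong, of 1] cols(3)[THEN fun_cong, of 2] cols(3)[THEN fun_cong, of 3]
      cols(3)[THEN fun_cong, of 4] cols(3)[THEN fun_cong, of 5] col3 col4
    by (simp_all add: mult5_def)
  have "A 5 5 \<noteq> 0"
  proof -
    obtain i where i: "A i 5 \<noteq> 0" using assms(3) ..
    with assms(1) have "i \<in> {1..5}" by (auto simp: is_matrix_def)
    then show ?thesis using i col5 by (cases rule: in_1_5_cases) auto
  qed
  then have "A 3 3 \<noteq> 0" "A 4 4 \<noteq> 0" using col5 by auto
  have col13: "A 2 1 = 0"
      "A 5 5 * a = a * (A 1 1 * A 3 3 - A 3 1 * A 1 3) + (A 3 1 * A 4 3 - A 4 1 * A 3 3)"
    using cols(4)[THEN fun_cong, of 4] cols(4)[THEN fun_cong, of 5] col3 col5 \<open>A 3 3 \<noteq> 0\<close>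
    by (simp_all add: mult5_def)
  have "A 3 1 = 0" "A 3 2 = 0"
    using cols(5)[THEN fun_cong, of 5] cols(6)[THEN fun_cong, of 5] col4 \<open>A 4 4 \<noteq> 0\<close>
    by (simp_all add: mult5_def)
  then have diag: "A 3 3 = A 1 1 * A 2 2" "A 4 4 = A 1 1 * A 2 2 ^ 2"
      "A 5 5 = A 1 1 ^ 2 * A 2 2 ^ 3"
    using col3 col4 col5 col13 by (simp_all add: power2_eq_square power3_eq_cube)
  have "A 4 1 * A 3 3 = a * A 1 1 * (1 - A 2 2 ^ 2) * A 3 3"
    using col13(2) col3(1,4) diag \<open>A 3 1 = 0\<close>
    by (simp add: algebra_simps power2_eq_square power3_eq_cube)
  with \<open>A 3 3 \<noteq> 0\<close> have "A 4 1 = a * A 1 1 * (1 - A 2 2 ^ 2)" by simp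
  moreover have "A 5 4 = A 1 1 * A 2 2 * (A 1 2 * a - A 4 2)"
    using col3(1) col4(5) diag \<open>A 3 2 = 0\<close> by (simp add: algebra_simps)
  ultimately have "A = aut_matrix a (A 1 1) (A 2 2) (A 1 2) (A 4 2) (A 5 1) (A 5 2)"
    using assms(1) col3 col4 col5 col13 diag \<open>A 3 1 = 0\<close> \<open>A 3 2 = 0\<close>
    by (intro aut_matrix_eqI) auto
  moreover have "A 1 1 \<noteq> 0" "A 2 2 \<noteq> 0" using \<open>A 3 3 \<noteq> 0\<close> diag by auto
  ultimately show ?thesis by blast
qed

lemma is_matrix_aut_matrix: "is_matrix 5 (aut_matrix a x y a12 a42 a51 a52)"
  by (simp add: aut_matrix_def is_matrix_def mat5_def)

lemma matvec_aut_matrix: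
  "matvec 5 (aut_matrix a x y a12 a42 a51 a52) v =
     (\<lambda>i. if i = 1 then x * v 1 + a12 * v 2
      else if i = 2 then y * v 2
      else if i = 3 then x * y * v 3
      else if i = 4 then a * x * (1 - y^2) * v 1 + a42 * v 2 + x * y^2 * v 4
      else if i = 5 then a51 * v 1 + a52 * v 2 + x * y * (a12 * a - a42) * v 4 + x^2 * y^3 * v 5
      else 0)"
  by (rule ext) (simp add: matvec_def sum_1_to_5 aut_matrix_def mat5_def del: One_nat_def)

lemma aut_matrix_mult5_hom:
  "matvec 5 (aut_matrix a x y a12 a42 a51 a52) (mult5 a u v) =
     mult5 a (matvec 5 (aut_matrix a x y a12 a42 a51 a52) u)
       (matvec 5 (aut_matrix a x y a12 a42 a51 a52) v)"
  by (rule ext)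
    (simp add: matvec_aut_matrix mult5_def algebra_simps power2_eq_square power3_eq_cube
      del: One_nat_def)

lemma bij_aut_matrix:
  assumes "x \<noteq> 0" and "y \<noteq> 0"
  shows "bij_betw (matvec 5 (aut_matrix a x y a12 a42 a51 a52)) (vecs 5) (vecs 5)"
proof -
  define w2 :: "(nat \<Rightarrow> complex) \<Rightarrow> complex" where "w2 w = w 2 / y" for w
  define w1 :: "(nat \<Rightarrow> complex) \<Rightarrow> complex" where "w1 w = (w 1 - a12 * w2 w) / x" for w
  define w4 :: "(nat \<Rightarrow> complex) \<Rightarrow> complex"
    where "w4 w = (w 4 - a * x * (1 - y^2) * w1 w - a42 * w2 w) / (x * y^2)" for w
  define solve :: "(nat \<Rightarrow> complex) \<Rightarrow> nat \<Rightarrow> complex"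
    where "solve w = (\<lambda>i. if i = 1 then w1 w else if i = 2 then w2 w
      else if i = 3 then w 3 / (x * y)
      else if i = 4 then w4 w
      else if i = 5
        then (w 5 - a51 * w1 w - a52 * w2 w - x * y * (a12 * a - a42) * w4 w) / (x^2 * y^3)
      else 0)" for w
  let ?M = "matvec 5 (aut_matrix a x y a12 a42 a51 a52)"
  show ?thesis
  proof (rule bij_betw_byWitness[where f' = solve])
    show "\<forall>v\<in>vecs 5. solve (?M v) = v"
    proof (intro ballI ext)
      fix v i assume "v \<in> vecs 5"
      then show "solve (?M v) i = v i"
        using assms
        by (auto simp: solve_def w1_def w2_def w4_def matvec_aut_matrix vecs_def field_simps)
    qed
    show "\<forall>w\<in>vecs 5. ?M (solve w) = w"
    proof (intro ballI ext)
      fix w i assume "w \<in> vecs 5"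
      then show "?M (solve w) i = w i"
        using assms
        by (auto simp: solve_def w1_def w2_def w4_def matvec_aut_matrix vecs_def field_simps)
    qed
    show "?M ` vecs 5 \<subseteq> vecs 5" "solve ` vecs 5 \<subseteq> vecs 5"
      by (auto simp: matvec_def solve_def vecs_def)
  qed
qed

theorem mainTheorem15:
  fixes c :: "nat \<Rightarrow> nat \<Rightarrow> nat \<Rightarrow> complex" and A :: "nat \<Rightarrow> nat \<Rightarrow> complex"
  assumes "in_T' 5 c" and "c 1 3 4 = 0" and "c 1 4 5 = 0" and "c 2 4 5 = 0"
  shows "is_automorphism 5 c A \<longleftrightarrow>
    (\<exists>x y a12 a42 a51 a52. x \<noteq> 0 \<and> y \<noteq> 0 \<and>
      A = mat5 [[x,                     a12, 0,     0,                        0],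
                [0,                     y,   0,     0,                        0],
                [0,                     0,   x * y, 0,                        0],
                [c 1 3 5 * x * (1 - y^2), a42, 0,     x * y^2,                  0],
                [a51,                   a52, 0,     x * y * (a12 * c 1 3 5 - a42), x^2 * y^3]])"
  unfolding aut_matrix_def[symmetric] is_automorphism_def alg_mult_T'_5[OF assms]
proof safe
  assume matrix: "is_matrix 5 A" and bij: "bij_betw (matvec 5 A) (vecs 5) (vecs 5)"
    and hom: "\<forall>u\<in>vecs 5. \<forall>v\<in>vecs 5. matvec 5 A (mult5 (c 1 3 5) u v) =
           mult5 (c 1 3 5) (matvec 5 A u) (matvec 5 A v)"
  have "\<exists>i. A i 5 \<noteq> 0"
    using inj_matvec_column_nonzero matrix bij by (simp add: bij_betw_def)
  with matrix hom show
    "\<exists>x y a12 a42 a51 a52. x \<noteq> 0 \<and> y \<noteq> 0 \<and> A = aut_matrix (c 1 3 5) x y a12 a42 a51 a52"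
    by (rule mult5_hom_imp_aut_matrix)
qed (simp_all add: is_matrix_aut_matrix bij_aut_matrix aut_matrix_mult5_hom)

end
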